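(* Let $\mu$ be a nonnegative finite measure on the Borel subsets of $[0,\infty)$, and for $\nu\ge 0$ define $|||\mu|||_\nu\in[0,\infty]$ by $|||\mu|||_\nu^2:=\sup_{t>0}t^{-2\nu}\mu([0,t))$. Let $\nu>0$. Then $$\mu([0,\Lambda))+\Lambda^{2\gamma}\int_{[\Lambda,\infty)}\lambda^{-2\gamma}\,d\mu(\lambda)\le\frac{\gamma}{\gamma-\nu}\Lambda^{2\nu}|||\mu|||_\nu^2\quad\text{for all }\Lambda>0\text{ and all }\gamma>\nu,$$ and $$\int_{[0,\Lambda)}\lambda^{-2r}\,d\mu(\lambda)\le\frac{r+\nu}{\nu}\Lambda^{2\nu}|||\mu|||_{r+\nu}^2\quad\text{for all }\Lambda>0\text{ and all }r\ge 0,$$ whenever the respective right-hand side is finite. *)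

theory Defs
  imports "HOL-Analysis.Analysis"
begin

definition tnorm2 :: "real measure \<Rightarrow> real \<Rightarrow> ennreal" where
  "tnorm2 M \<nu> = (SUP t\<in>{0<..}. ennreal (t powr (-2 * \<nu>)) * emeasure M {0..<t})"

definition negpow :: "real \<Rightarrow> real \<Rightarrow> ennreal" where
  "negpow r x = (if x = 0 then (if r = 0 then 1 else \<infinity>) else ennreal (x powr (-2 * r)))"

end

theory Submission
  imports Defs
begin

text \<open>Both estimates are layer-cake arguments. Each weight is an integral of an explicit density:
  for \<open>x \<ge> 0\<close>, \<open>1[x < \<Lambda>] + (\<Lambda>/x)^(2\<gamma>) 1[x \<ge> \<Lambda>] = \<Lambda>^(2\<gamma>) \<integral>_{s > max x \<Lambda>} 2\<gamma> s^(-2\<gamma>-1) ds\<close>,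
  and for \<open>0 < x < \<Lambda>\<close>, \<open>x^(-2r) = \<Lambda>^(-2r) + \<integral>_{x < s < \<Lambda>} 2r s^(-2r-1) ds\<close>.
  By Tonelli the left-hand sides become integrals of \<open>\<mu>([0,s))\<close> against these densities, and the
  defining bound \<open>\<mu>([0,s)) \<le> s^(2\<nu>) |||\<mu>|||\<^sub>\<nu>\<^sup>2\<close> leaves integrals of powers of \<open>s\<close>.
  In the second estimate finiteness of \<open>|||\<mu>|||_(r+\<nu>)\<close> forces \<open>\<mu>({0}) = 0\<close>, so the singularity
  of the weight at \<open>0\<close> is invisible to \<open>\<mu>\<close>.\<close>

lemma nn_integral_powr_greaterThan:
  fixes c e k :: real
  assumes "0 < c" "e < -1" "0 \<le> k"
  shows "(\<integral>\<^sup>+x\<in>{c<..}. ennreal (k * x powr e) \<partial>lborel)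
      = ennreal (k * (c powr (e + 1) / - (e + 1)))"
proof -
  have "(\<integral>\<^sup>+x\<in>{c<..}. ennreal (k * x powr e) \<partial>lborel) = (\<integral>\<^sup>+x\<in>{c..}. ennreal (k * x powr e) \<partial>lborel)"
    by (intro nn_integral_cong_AE eventually_mono[OF AE_lborel_singleton[of c]])
      (auto simp: indicator_def)
  also have "\<dots> = ennreal (k * (- (c powr (e + 1)) / (e + 1)))"
    using assms by (intro nn_integral_has_integral_lebesgue' has_integral_mult_right
        has_integral_powr_to_inf) auto
  also have "- (c powr (e + 1)) / (e + 1) = c powr (e + 1) / - (e + 1)"
    by (metis divide_minus_right minus_divide_left)
  finally show ?thesis .
qed

lemma nn_integral_powr_greaterThanLessThan_zero:
  fixes L p k :: real
  assumes "0 < L" "0 < p" "0 \<le> k"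
  shows "(\<integral>\<^sup>+x\<in>{0<..<L}. ennreal (k * x powr (p - 1)) \<partial>lborel) = ennreal (k * (L powr p / p))"
proof -
  have "(\<integral>\<^sup>+x\<in>{0<..<L}. ennreal (k * x powr (p - 1)) \<partial>lborel)
      = (\<integral>\<^sup>+x\<in>{0..L}. ennreal (k * x powr (p - 1)) \<partial>lborel)"
    by (intro nn_integral_cong_AE eventually_mono[OF eventually_conj[OF
          AE_lborel_singleton[of 0] AE_lborel_singleton[of L]]]) (auto simp: indicator_def)
  also have "\<dots> = ennreal (k * (L powr (p - 1 + 1) / (p - 1 + 1)))"
    using assms by (intro nn_integral_has_integral_lebesgue' has_integral_mult_right
        has_integral_powr_from_0) auto
  finally show ?thesis
    by simp
qed

lemma nn_integral_deriv_neg_powr: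
  fixes x L b :: real
  assumes "0 < x" "x \<le> L" "0 \<le> b"
  shows "(\<integral>\<^sup>+s\<in>{x<..<L}. ennreal (b * s powr (- b - 1)) \<partial>lborel)
      = ennreal (x powr (- b) - L powr (- b))"
proof -
  have "((\<lambda>s. b * s powr (- b - 1)) has_integral (- (L powr (- b))) - (- (x powr (- b)))) {x..L}"
  proof (rule fundamental_theorem_of_calculus)
    fix s assume "s \<in> {x..L}"
    then have "0 < s"
      using assms by auto
    then show "((\<lambda>s. - (s powr (- b))) has_vector_derivative b * s powr (- b - 1)) (at s within {x..L})"
      by (auto intro!: derivative_eq_intros simp flip: has_real_derivative_iff_has_vector_derivative
          simp: powr_diff powr_minus field_simps)
  qed (use assms in simp)
  then have "(\<integral>\<^sup>+s\<in>{x..L}. ennreal (b * s powr (- b - 1)) \<partial>lborel) = ennreal (x powr (- b) - L powr (- b))"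
    using assms by (subst nn_integral_has_integral_lebesgue') auto
  moreover have "(\<integral>\<^sup>+s\<in>{x<..<L}. ennreal (b * s powr (- b - 1)) \<partial>lborel)
      = (\<integral>\<^sup>+s\<in>{x..L}. ennreal (b * s powr (- b - 1)) \<partial>lborel)"
    by (intro nn_integral_cong_AE eventually_mono[OF eventually_conj[OF
          AE_lborel_singleton[of x] AE_lborel_singleton[of L]]]) (auto simp: indicator_def)
  ultimately show ?thesis
    by simp
qed

lemma ennreal_mult_powr:
  fixes c s e f :: real
  shows "ennreal (c * s powr e) * ennreal (s powr f) = ennreal (c * s powr (e + f))"
  by (simp only: powr_add mult.assoc ennreal_mult''[symmetric] powr_ge_zero)

lemma emeasure_le_tnorm2:
  assumes "sets M = sets borel" "0 < t" "A \<subseteq> {0..<t}" "A \<in> sets borel"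
  shows "emeasure M A \<le> ennreal (t powr (2 * \<nu>)) * tnorm2 M \<nu>"
proof -
  have "emeasure M A \<le> emeasure M {0..<t}"
    using assms by (intro emeasure_mono) auto
  also have "\<dots> = ennreal (t powr (2 * \<nu>)) * (ennreal (t powr (-2 * \<nu>)) * emeasure M {0..<t})"
    using \<open>0 < t\<close> by (simp add: mult.assoc[symmetric] ennreal_mult''[symmetric] powr_add[symmetric])
  also have "\<dots> \<le> ennreal (t powr (2 * \<nu>)) * tnorm2 M \<nu>"
    unfolding tnorm2_def using \<open>0 < t\<close> by (intro mult_left_mono SUP_upper) auto
  finally show ?thesis .
qed

lemma emeasure_singleton_zero_if_tnorm2_finite:
  assumes "sets M = sets borel" "0 < \<nu>" "tnorm2 M \<nu> < \<infinity>"
  shows "emeasure M {0} = 0"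
proof -
  obtain c where c: "tnorm2 M \<nu> = ennreal c" "0 \<le> c"
    using assms(3) by (cases "tnorm2 M \<nu>" rule: ennreal_cases) auto
  have "emeasure M {0} \<le> 0 + ennreal e" if "0 < e" for e :: real
  proof -
    define t where "t = (e / (c + 1)) powr (1 / (2 * \<nu>))"
    have "0 < t"
      using that c(2) by (simp add: t_def)
    have t: "t powr (2 * \<nu>) = e / (c + 1)"
      using that c(2) assms(2) by (simp add: t_def powr_powr)
    have "emeasure M {0} \<le> ennreal (t powr (2 * \<nu>)) * tnorm2 M \<nu>"
      using \<open>0 < t\<close> by (intro emeasure_le_tnorm2 assms(1)) auto
    also have "\<dots> = ennreal (e * (c / (c + 1)))"
      using that c by (simp add: t ennreal_mult[symmetric])
    also have "\<dots> \<le> ennreal e"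
      using that c(2) by (intro ennreal_leI mult_left_le) auto
    finally show ?thesis
      by simp
  qed
  then have "emeasure M {0} \<le> 0"
    by (rule ennreal_le_epsilon)
  then show ?thesis
    by simp
qed

lemma borel_measurable_set_nn_integral_greaterThan[measurable]:
  fixes g :: "real \<Rightarrow> ennreal"
  assumes [measurable]: "g \<in> borel_measurable borel"
  shows "(\<lambda>x. \<integral>\<^sup>+s\<in>{x<..}. g s \<partial>lborel) \<in> borel_measurable borel"
proof -
  have "(\<lambda>(x, s). g s * indicator {x<..} s) \<in> borel_measurable (borel \<Otimes>\<^sub>M lborel)"
    unfolding indicator_def greaterThan_iff by measurable
  then show ?thesis
    by (rule lborel.borel_measurable_nn_integral)
qed

lemma set_nn_integral_tail_eq:
  fixes M :: "real measure" and g :: "real \<Rightarrow> ennreal"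
  assumes "sigma_finite_measure M" "sets M = sets borel"
    and "g \<in> borel_measurable borel" "A \<in> sets borel"
  shows "(\<integral>\<^sup>+x\<in>A. (\<integral>\<^sup>+s\<in>{x<..}. g s \<partial>lborel) \<partial>M)
       = (\<integral>\<^sup>+s. g s * emeasure M (A \<inter> {..<s}) \<partial>lborel)"
proof -
  interpret pair_sigma_finite M "lborel :: real measure"
    using assms(1) lborel.sigma_finite_measure_axioms by (simp add: pair_sigma_finite_def)
  have [measurable_cong]: "sets M = sets borel"
    by (rule assms(2))
  have meas: "(\<lambda>(x, s). g s * indicator {x<..} s * indicator A x)
      \<in> borel_measurable (M \<Otimes>\<^sub>M lborel)"
    using assms(3,4) unfolding indicator_def greaterThan_iff by measurable
  have "(\<integral>\<^sup>+x\<in>A. (\<integral>\<^sup>+s\<in>{x<..}. g s \<partial>lborel) \<partial>M)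
      = (\<integral>\<^sup>+x. (\<integral>\<^sup>+s. g s * indicator {x<..} s * indicator A x \<partial>lborel) \<partial>M)"
    using assms(3) by (intro nn_integral_cong nn_integral_multc[symmetric]) simp
  also have "\<dots> = (\<integral>\<^sup>+s. (\<integral>\<^sup>+x. g s * indicator (A \<inter> {..<s}) x \<partial>M) \<partial>lborel)"
    unfolding Fubini'[OF meas, symmetric]
    by (intro nn_integral_cong) (auto simp: indicator_def)
  also have "\<dots> = (\<integral>\<^sup>+s. g s * emeasure M (A \<inter> {..<s}) \<partial>lborel)"
    using assms(2,4) by (intro nn_integral_cong nn_integral_cmult_indicator) auto
  finally show ?thesis .
qed

lemma emeasure_plus_weighted_tail_le_tnorm2:
  fixes M :: "real measure"
  assumes "sets M = sets borel" "sigma_finite_measure M"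
    and "0 < \<Lambda>" "0 < \<gamma>" "\<nu> < \<gamma>"
  shows "emeasure M {0..<\<Lambda>} + ennreal (\<Lambda> powr (2 * \<gamma>)) * (\<integral>\<^sup>+x\<in>{\<Lambda>..}. negpow \<gamma> x \<partial>M)
      \<le> ennreal (\<gamma> / (\<gamma> - \<nu>) * \<Lambda> powr (2 * \<nu>)) * tnorm2 M \<nu>"
proof -
  define a where "a = 2 * \<gamma>"
  define p where "p = 2 * \<nu>"
  define g where "g s = ennreal (a * s powr (- a - 1)) * indicator {\<Lambda><..} s" for s :: real
  have "0 < a" "p < a"
    using assms by (auto simp: a_def p_def)
  have [measurable_cong]: "sets M = sets borel"
    by (rule assms(1))
  have g_measurable[measurable]: "g \<in> borel_measurable borel"
    unfolding g_def by measurable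
  have g_tail: "(\<integral>\<^sup>+s\<in>{x<..}. g s \<partial>lborel) = ennreal (max x \<Lambda> powr (- a))" for x
  proof -
    have "(\<integral>\<^sup>+s\<in>{x<..}. g s \<partial>lborel)
        = (\<integral>\<^sup>+s\<in>{max x \<Lambda><..}. ennreal (a * s powr (- a - 1)) \<partial>lborel)"
      by (intro nn_integral_cong) (auto simp: g_def indicator_def)
    also have "\<dots> = ennreal (max x \<Lambda> powr (- a))"
      using \<open>0 < a\<close> assms(3) by (subst nn_integral_powr_greaterThan) auto
    finally show ?thesis .
  qed
  have weight: "indicator {0..<\<Lambda>} x + ennreal (\<Lambda> powr a) * (negpow \<gamma> x * indicator {\<Lambda>..} x)
      = ennreal (\<Lambda> powr a) * (\<integral>\<^sup>+s\<in>{x<..}. g s \<partial>lborel) * indicator {0..} x" for x :: real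
  proof (cases "0 \<le> x")
    case True
    show ?thesis
    proof (cases "x < \<Lambda>")
      case True
      with \<open>0 \<le> x\<close> assms(3) show ?thesis
        by (simp add: g_tail max_def ennreal_mult''[symmetric] powr_add[symmetric])
    next
      case False
      with assms(3) show ?thesis
        by (simp add: g_tail max_def negpow_def a_def ennreal_mult''[symmetric])
    qed
  qed (use assms(3) in simp)
  have "emeasure M {0..<\<Lambda>} + ennreal (\<Lambda> powr (2 * \<gamma>)) * (\<integral>\<^sup>+x\<in>{\<Lambda>..}. negpow \<gamma> x \<partial>M)
      = (\<integral>\<^sup>+x. indicator {0..<\<Lambda>} x + ennreal (\<Lambda> powr a) * (negpow \<gamma> x * indicator {\<Lambda>..} x) \<partial>M)"
    by (subst nn_integral_add) (auto simp: a_def negpow_def nn_integral_cmult)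
  also have "\<dots> = ennreal (\<Lambda> powr a) * (\<integral>\<^sup>+x\<in>{0..}. (\<integral>\<^sup>+s\<in>{x<..}. g s \<partial>lborel) \<partial>M)"
    unfolding weight g_tail by (subst nn_integral_cmult[symmetric]) (auto simp: mult.assoc)
  also have "\<dots> = ennreal (\<Lambda> powr a) * (\<integral>\<^sup>+s. g s * emeasure M ({0..} \<inter> {..<s}) \<partial>lborel)"
    using assms(1,2) by (simp add: set_nn_integral_tail_eq)
  also have "\<dots> \<le> ennreal (\<Lambda> powr a) * (\<integral>\<^sup>+s. g s * (ennreal (s powr p) * tnorm2 M \<nu>) \<partial>lborel)"
  proof (rule mult_left_mono, rule nn_integral_mono)
    fix s :: real
    show "g s * emeasure M ({0..} \<inter> {..<s}) \<le> g s * (ennreal (s powr p) * tnorm2 M \<nu>)"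
    proof (cases "\<Lambda> < s")
      case True
      with assms(1,3) show ?thesis
        by (intro mult_left_mono emeasure_le_tnorm2[where \<nu> = \<nu>, unfolded p_def[symmetric]]) auto
    qed (simp add: g_def indicator_def)
  qed simp
  also have "\<dots> = ennreal (\<Lambda> powr a)
      * ((\<integral>\<^sup>+s\<in>{\<Lambda><..}. ennreal (a * s powr (- a - 1 + p)) \<partial>lborel) * tnorm2 M \<nu>)"
  proof -
    have "g s * (ennreal (s powr p) * tnorm2 M \<nu>)
        = ennreal (a * s powr (- a - 1 + p)) * indicator {\<Lambda><..} s * tnorm2 M \<nu>" for s
    proof (cases "\<Lambda> < s")
      case True
      then show ?thesis
        by (simp add: g_def mult.assoc[symmetric] ennreal_mult_powr)
    qed (simp add: g_def)
    then show ?thesis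
      by (subst nn_integral_multc[symmetric]) (auto simp: mult.assoc)
  qed
  also have "\<dots> = ennreal (\<Lambda> powr a * (a * (\<Lambda> powr (p - a) / (a - p)))) * tnorm2 M \<nu>"
    using \<open>0 < a\<close> \<open>p < a\<close> assms(3)
    by (subst nn_integral_powr_greaterThan) (auto simp: mult.assoc[symmetric] ennreal_mult''[symmetric])
  also have "\<Lambda> powr a * (a * (\<Lambda> powr (p - a) / (a - p))) = \<gamma> / (\<gamma> - \<nu>) * \<Lambda> powr (2 * \<nu>)"
    using \<open>p < a\<close> by (simp add: a_def p_def field_simps powr_add[symmetric])
  finally show ?thesis .
qed

lemma set_nn_integral_negpow_le_tnorm2:
  fixes M :: "real measure"
  assumes "sets M = sets borel" "sigma_finite_measure M"
    and "0 < \<Lambda>" "0 < \<nu>" "0 \<le> r" "tnorm2 M (r + \<nu>) < \<infinity>"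
  shows "(\<integral>\<^sup>+x\<in>{0..<\<Lambda>}. negpow r x \<partial>M)
      \<le> ennreal ((r + \<nu>) / \<nu> * \<Lambda> powr (2 * \<nu>)) * tnorm2 M (r + \<nu>)"
proof -
  define b where "b = 2 * r"
  define p where "p = 2 * \<nu>"
  define T where "T = tnorm2 M (r + \<nu>)"
  define g where "g s = ennreal (b * s powr (- b - 1)) * indicator {0<..<\<Lambda>} s" for s :: real
  have "0 \<le> b" "0 < p"
    using assms by (auto simp: b_def p_def)
  have [measurable_cong]: "sets M = sets borel"
    by (rule assms(1))
  have g_measurable[measurable]: "g \<in> borel_measurable borel"
    unfolding g_def by measurable
  have bound: "emeasure M A \<le> ennreal (s powr (b + p)) * T"
    if "0 < s" "A \<subseteq> {0..<s}" "A \<in> sets borel" for A s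
    using emeasure_le_tnorm2[OF assms(1) that, of "r + \<nu>"]
    by (simp add: b_def p_def T_def algebra_simps)
  have g_tail: "(\<integral>\<^sup>+s\<in>{x<..}. g s \<partial>lborel)
      = ennreal (x powr (- b) - \<Lambda> powr (- b)) * indicator {..<\<Lambda>} x" if "0 < x" for x
  proof (cases "x < \<Lambda>")
    case True
    have "(\<integral>\<^sup>+s\<in>{x<..}. g s \<partial>lborel) = (\<integral>\<^sup>+s\<in>{x<..<\<Lambda>}. ennreal (b * s powr (- b - 1)) \<partial>lborel)"
      using that by (intro nn_integral_cong) (auto simp: g_def indicator_def)
    with True that \<open>0 \<le> b\<close> show ?thesis
      by (simp add: nn_integral_deriv_neg_powr)
  next
    case False
    have "(\<integral>\<^sup>+s\<in>{x<..}. g s \<partial>lborel) = (\<integral>\<^sup>+s. 0 \<partial>(lborel :: real measure))"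
      by (rule nn_integral_cong) (use False in \<open>simp add: g_def indicator_def\<close>)
    with False show ?thesis
      by simp
  qed
  have weight: "negpow r x * indicator {0..<\<Lambda>} x
      = ennreal (\<Lambda> powr (- b)) * indicator ({0<..} \<inter> {..<\<Lambda>}) x
        + (\<integral>\<^sup>+s\<in>{x<..}. g s \<partial>lborel) * indicator {0<..} x" if "x \<noteq> 0" for x
  proof (cases "0 < x \<and> x < \<Lambda>")
    case True
    have "\<Lambda> powr (- b) \<le> x powr (- b)"
      using True \<open>0 \<le> b\<close> by (intro powr_mono2') auto
    with True show ?thesis
      by (simp add: g_tail negpow_def b_def ennreal_plus[symmetric] del: ennreal_plus)
  next
    case False
    with that show ?thesis
      by (cases "0 < x") (simp_all add: g_tail)
  qed
  have "AE x in M. x \<noteq> 0"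
    using emeasure_singleton_zero_if_tnorm2_finite[OF assms(1) _ assms(6)] assms(4,5)
    by (intro AE_I'[of "{0}"]) (auto simp: assms(1))
  then have "(\<integral>\<^sup>+x\<in>{0..<\<Lambda>}. negpow r x \<partial>M)
      = (\<integral>\<^sup>+x. ennreal (\<Lambda> powr (- b)) * indicator ({0<..} \<inter> {..<\<Lambda>}) x
          + (\<integral>\<^sup>+s\<in>{x<..}. g s \<partial>lborel) * indicator {0<..} x \<partial>M)"
    by (intro nn_integral_cong_AE) (auto elim!: eventually_mono simp: weight)
  also have "\<dots> = ennreal (\<Lambda> powr (- b)) * emeasure M ({0<..} \<inter> {..<\<Lambda>})
      + (\<integral>\<^sup>+s. g s * emeasure M ({0<..} \<inter> {..<s}) \<partial>lborel)"
    using assms(1,2)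
    by (subst nn_integral_add) (auto simp: nn_integral_cmult_indicator set_nn_integral_tail_eq)
  also have "\<dots> \<le> ennreal (\<Lambda> powr (- b)) * (ennreal (\<Lambda> powr (b + p)) * T)
      + (\<integral>\<^sup>+s. g s * (ennreal (s powr (b + p)) * T) \<partial>lborel)"
  proof (rule add_mono[OF mult_left_mono nn_integral_mono])
    show "emeasure M ({0<..} \<inter> {..<\<Lambda>}) \<le> ennreal (\<Lambda> powr (b + p)) * T"
      using assms(3) by (intro bound) auto
  next
    fix s :: real
    show "g s * emeasure M ({0<..} \<inter> {..<s}) \<le> g s * (ennreal (s powr (b + p)) * T)"
    proof (cases "0 < s")
      case True
      then show ?thesis
        by (intro mult_left_mono bound) auto
    qed (simp add: g_def indicator_def)
  qed simp
  also have "\<dots> = ennreal (\<Lambda> powr p) * T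
      + (\<integral>\<^sup>+s\<in>{0<..<\<Lambda>}. ennreal (b * s powr (p - 1)) \<partial>lborel) * T"
  proof -
    have "g s * (ennreal (s powr (b + p)) * T)
        = ennreal (b * s powr (p - 1)) * indicator {0<..<\<Lambda>} s * T" for s
    proof -
      have "ennreal (b * s powr (- b - 1)) * ennreal (s powr (b + p)) = ennreal (b * s powr (p - 1))"
        by (simp add: ennreal_mult_powr)
      then show ?thesis
        by (simp add: g_def ac_simps)
    qed
    moreover have "ennreal (\<Lambda> powr (- b)) * ennreal (\<Lambda> powr (b + p)) = ennreal (\<Lambda> powr p)"
      by (simp add: ennreal_mult''[symmetric] powr_add[symmetric])
    ultimately show ?thesis
      by (subst nn_integral_multc[symmetric]) (auto simp: mult.assoc[symmetric])
  qed
  also have "\<dots> = ennreal (\<Lambda> powr p + b * (\<Lambda> powr p / p)) * T"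
    using assms(3) \<open>0 \<le> b\<close> \<open>0 < p\<close>
    by (simp add: nn_integral_powr_greaterThanLessThan_zero distrib_right)
  also have "\<Lambda> powr p + b * (\<Lambda> powr p / p) = (r + \<nu>) / \<nu> * \<Lambda> powr (2 * \<nu>)"
    using assms(4) by (simp add: b_def p_def field_simps)
  finally show ?thesis
    by (simp add: T_def)
qed

theorem lemma1:
  fixes M :: "real measure" and \<nu> :: real
  assumes "sets M = sets borel"
    and "finite_measure M"
    and "emeasure M {..<0} = 0"
    and "\<nu> > 0"
  shows "(\<forall>\<Lambda>>0. \<forall>\<gamma>>\<nu>.
            ennreal (\<gamma> / (\<gamma> - \<nu>) * \<Lambda> powr (2 * \<nu>)) * tnorm2 M \<nu> < \<infinity> \<longrightarrow>
            emeasure M {0..<\<Lambda>} + ennreal (\<Lambda> powr (2 * \<gamma>)) * (\<integral>\<^sup>+ x\<in>{\<Lambda>..}. negpow \<gamma> x \<partial>M)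
              \<le> ennreal (\<gamma> / (\<gamma> - \<nu>) * \<Lambda> powr (2 * \<nu>)) * tnorm2 M \<nu>)
       \<and> (\<forall>\<Lambda>>0. \<forall>r\<ge>0.
            ennreal ((r + \<nu>) / \<nu> * \<Lambda> powr (2 * \<nu>)) * tnorm2 M (r + \<nu>) < \<infinity> \<longrightarrow>
            (\<integral>\<^sup>+ x\<in>{0..<\<Lambda>}. negpow r x \<partial>M)
              \<le> ennreal ((r + \<nu>) / \<nu> * \<Lambda> powr (2 * \<nu>)) * tnorm2 M (r + \<nu>))"
proof -
  have "sigma_finite_measure M"
    using assms(2) by (rule finite_measure.axioms(1))
  moreover have "tnorm2 M (r + \<nu>) < \<infinity>"
    if "ennreal ((r + \<nu>) / \<nu> * \<Lambda> powr (2 * \<nu>)) * tnorm2 M (r + \<nu>) < \<infinity>" "0 < \<Lambda>" "0 \<le> r"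
    for \<Lambda> r
    using that assms(4) by (auto simp: ennreal_mult_less_top)
  ultimately show ?thesis
    using assms(1,4)
    by (intro conjI allI impI emeasure_plus_weighted_tail_le_tnorm2
        set_nn_integral_negpow_le_tnorm2) auto
qed

end
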